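(* Let $G=A\rtimes H$ be a semi-direct product of a finite abelian group $A$ and a finite group $H$ such that the action homomorphism $H\to\mathrm{Aut}(A)$ is injective. Let $(\pi,V)$ be a faithful representation of $G$ over $\mathbb{C}$. Then, via its permutation action on the one-dimensional $A$-irreducible constituents of $V$, $H$ admits an injective homomorphism $H\to S_{p}$ with $p=\dim_{\mathbb{C}}V$. Consequently $\mathrm{mdim}_{\mathbb{C}}(G)\ge\mu(H)$.
   Context: For a finite group $G$ and a field $F$, $\mathrm{mdim}_F(G)$ denotes the smallest dimension of a faithful representation of $G$ over $F$. For a finite group $H$, the minimal permutation degree $\mu(H)$ is the smallest $n$ such that $H$ embeds as a subgroup of the symmetric group $S_n$. *)

theory Defs
  imports "HOL-Algebra.Sym_Groups" "Jordan_Normal_Form.Matrix"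
begin

definition GL_C :: "nat \<Rightarrow> complex mat monoid" where
  "GL_C n = \<lparr> carrier = {M. M \<in> carrier_mat n n \<and> invertible_mat M},
             mult = (\<lambda>M N. M * N), one = 1\<^sub>m n \<rparr>"

definition faithful_rep :: "('g, 'b) monoid_scheme \<Rightarrow> nat \<Rightarrow> ('g \<Rightarrow> complex mat) \<Rightarrow> bool" where
  "faithful_rep G n \<pi> \<longleftrightarrow> \<pi> \<in> hom G (GL_C n) \<and> inj_on \<pi> (carrier G)"

definition mdim_C :: "('g, 'b) monoid_scheme \<Rightarrow> nat" where
  "mdim_C G = (LEAST n. \<exists>\<pi>. faithful_rep G n \<pi>)"

definition embeds_in_sym :: "('h, 'b) monoid_scheme \<Rightarrow> nat \<Rightarrow> bool" where
  "embeds_in_sym H n \<longleftrightarrow> (\<exists>f. f \<in> hom H (sym_group n) \<and> inj_on f (carrier H))"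

definition min_perm_degree :: "('h, 'b) monoid_scheme \<Rightarrow> nat" where
  "min_perm_degree H = (LEAST n. embeds_in_sym H n)"

definition internal_semidirect :: "('g, 'b) monoid_scheme \<Rightarrow> 'g set \<Rightarrow> 'g set \<Rightarrow> bool" where
  "internal_semidirect G A H \<longleftrightarrow> A \<lhd> G \<and> subgroup H G \<and> A \<inter> H = {\<one>\<^bsub>G\<^esub>}
     \<and> A <#>\<^bsub>G\<^esub> H = carrier G"

definition conj_action :: "('g, 'b) monoid_scheme \<Rightarrow> 'g set \<Rightarrow> 'g \<Rightarrow> ('g \<Rightarrow> 'g)" where
  "conj_action G A h = (\<lambda>a\<in>A. h \<otimes>\<^bsub>G\<^esub> a \<otimes>\<^bsub>G\<^esub> inv\<^bsub>G\<^esub> h)"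

end

theory Submission
  imports Defs "Jordan_Normal_Form.Determinant" "HOL-Algebra.Multiplicative_Group"
begin

text \<open>Restricted to the abelian normal subgroup \<open>A\<close>, a faithful representation \<open>\<pi>\<close> of degree \<open>p\<close>
  consists of commuting matrices of finite order \<open>k = |G|\<close>. For each such matrix \<open>U\<close> the averages
  \<open>(1/k) \<Sum>\<^sub>m \<omega>\<^sup>-\<^sup>m U\<^sup>m\<close> over the \<open>k\<close>-th roots of unity \<open>\<omega>\<close> are orthogonal idempotents summing to
  the identity, with \<open>U\<close> acting as \<open>\<omega>\<close> on the \<open>\<omega>\<close>-th one; multiplying these over \<open>a \<in> A\<close> gives a
  joint eigenresolution of \<open>\<pi>|\<^sub>A\<close>. Every weight of \<open>A\<close> (the eigenvalue function of a common
  eigenvector, i.e. a one-dimensional constituent) is the eigenvalue function of a nonzero member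
  of this resolution, and at most \<open>p\<close> orthogonal idempotents are nonzero; so there are at most \<open>p\<close>
  weights, and they separate the points of \<open>\<pi>(A)\<close>, hence of \<open>A\<close>.

  \<open>H\<close> permutes the weights by \<open>(h\<cdot>\<psi>)(a) = \<psi>(h\<^sup>-\<^sup>1 a h)\<close>. If \<open>h\<close> and \<open>h'\<close> act alike, then, since the weights
  separate \<open>\<pi>(A)\<close> and \<open>\<pi>\<close> is faithful, they conjugate \<open>A\<close> alike, so \<open>h = h'\<close> because \<open>H \<rightarrow> Aut(A)\<close> is injective; thus \<open>H \<hookrightarrow> S\<^sub>p\<close>. Finally every
  finite group has a faithful complex representation (Cayley's embedding followed by permutation
  matrices), so \<open>mdim\<^sub>\<complex>(G)\<close> is attained and bounds \<open>\<mu>(H)\<close>.\<close>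

lemma index_mult_mat_square:
  assumes "A \<in> carrier_mat n n" "B \<in> carrier_mat n n" "r < n" "s < n"
  shows "(A * B) $$ (r, s) = (\<Sum>l<n. A $$ (r, l) * B $$ (l, s))"
  using assms by (simp add: scalar_prod_def lessThan_atLeast0)

lemma smult_smult_mat: "a \<cdot>\<^sub>m (b \<cdot>\<^sub>m A) = (a * b :: 'a :: semigroup_mult) \<cdot>\<^sub>m A"
  by (rule eq_matI) (simp_all add: mult.assoc)

lemma mult_mat_vec_zero [simp]: "A \<in> carrier_mat n m \<Longrightarrow> A *\<^sub>v 0\<^sub>v m = 0\<^sub>v n"
  by (rule eq_vecI) auto

lemma smult_mat_mult_vec:
  assumes "A \<in> carrier_mat n m" "w \<in> carrier_vec m"
  shows "(c \<cdot>\<^sub>m A) *\<^sub>v w = (c :: 'a :: comm_semiring_0) \<cdot>\<^sub>v (A *\<^sub>v w)"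
  by (rule eq_vecI) (use assms in \<open>auto simp: scalar_prod_def sum_distrib_left mult.assoc\<close>)

lemma smult_vec_cancel:
  assumes "v \<in> carrier_vec n" "v \<noteq> 0\<^sub>v n" "c \<cdot>\<^sub>v v = d \<cdot>\<^sub>v v"
  shows "c = (d :: 'a :: idom)"
proof -
  obtain i where i: "i < n" "v $ i \<noteq> 0"
    using assms(1,2) by (metis eq_vecI carrier_vecD index_zero_vec)
  have "(c \<cdot>\<^sub>v v) $ i = (d \<cdot>\<^sub>v v) $ i" using assms(3) by simp
  then show ?thesis using i assms(1) by auto
qed

lemma nonzero_mat_has_nonzero_col:
  assumes "A \<in> carrier_mat n m" "A \<noteq> 0\<^sub>m n m"
  obtains j where "j < m" "col A j \<noteq> 0\<^sub>v n"
proof -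
  have "\<exists>j<m. col A j \<noteq> 0\<^sub>v n"
  proof (rule ccontr)
    assume "\<not> ?thesis"
    then have "A $$ (i, j) = 0" if "i < n" "j < m" for i j
      using that assms(1) by (metis carrier_matD col_def index_vec index_zero_vec(1))
    then have "A = 0\<^sub>m n m" using assms(1) by (intro eq_matI) auto
    with assms(2) show False by simp
  qed
  then show ?thesis using that by blast
qed

lemma pow_mat_commute:
  assumes A: "A \<in> carrier_mat n n" and X: "X \<in> carrier_mat n n" and comm: "A * X = X * A"
  shows "A ^\<^sub>m m * X = X * A ^\<^sub>m m"
proof (induction m)
  case 0
  then show ?case using A X by simp
next
  case (Suc m)
  have Am: "A ^\<^sub>m m \<in> carrier_mat n n" using A by simp
  have "A ^\<^sub>m Suc m * X = A ^\<^sub>m m * (X * A)"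
    using assoc_mult_mat[OF Am A X] comm by simp
  also have "\<dots> = (X * A ^\<^sub>m m) * A"
    using assoc_mult_mat[OF Am X A] Suc.IH by metis
  also have "\<dots> = X * A ^\<^sub>m Suc m"
    using assoc_mult_mat[OF X Am A] by simp
  finally show ?case .
qed

lemma mult_mat_commute_middle:
  assumes "A \<in> carrier_mat n n" "B \<in> carrier_mat n n" "C \<in> carrier_mat n n" "D \<in> carrier_mat n n"
    and "B * C = C * B"
  shows "A * B * (C * D) = A * C * (B * D)"
proof -
  have "A * B * (C * D) = A * ((B * C) * D)"
    using assms(1-4) by (simp add: assoc_mult_mat[of _ n n _ n _ n])
  also have "\<dots> = A * C * (B * D)"
    using assms by (simp add: assoc_mult_mat[of _ n n _ n _ n])
  finally show ?thesis .
qed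

lemma mult_mat_cols:
  assumes A: "A \<in> carrier_mat n n" and v: "\<And>c. c < m \<Longrightarrow> v c \<in> carrier_vec n"
  shows "A * mat n m (\<lambda>(i, c). v c $ i) = mat n m (\<lambda>(i, c). (A *\<^sub>v v c) $ i)"
proof (rule eq_matI)
  fix i c assume "i < dim_row (mat n m (\<lambda>(i, c). (A *\<^sub>v v c) $ i))"
    "c < dim_col (mat n m (\<lambda>(i, c). (A *\<^sub>v v c) $ i))"
  then have i: "i < n" and c: "c < m" by simp_all
  have "col (mat n m (\<lambda>(i, c). v c $ i)) c = v c"
    using c v[OF c] by (auto intro!: eq_vecI)
  then show "(A * mat n m (\<lambda>(i, c). v c $ i)) $$ (i, c) = mat n m (\<lambda>(i, c). (A *\<^sub>v v c) $ i) $$ (i, c)"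
    using A i c by simp
qed (use A in simp_all)

lemma sum_lessThan_shift_periodic:
  "f k = f 0 \<Longrightarrow> (\<Sum>m<k. f (Suc m)) = (\<Sum>m<k. f m :: 'a :: cancel_comm_monoid_add)"
  using sum.lessThan_Suc_shift[of f k] sum.lessThan_Suc[of f k] by (simp add: add.commute)

text \<open>Since a matrix carries its dimensions, \<open>'a mat\<close> is no additive monoid and \<open>sum\<close> does not
  apply; finite sums of \<open>n \<times> n\<close> matrices are formed entrywise, with \<open>n\<close> given explicitly.\<close>

definition mat_sum :: "nat \<Rightarrow> ('i \<Rightarrow> 'a :: comm_ring_1 mat) \<Rightarrow> 'i set \<Rightarrow> 'a mat" where
  "mat_sum n F I = mat n n (\<lambda>(r, s). \<Sum>i\<in>I. F i $$ (r, s))"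

lemma mat_sum_carrier [simp]: "mat_sum n F I \<in> carrier_mat n n"
  and dim_mat_sum [simp]: "dim_row (mat_sum n F I) = n" "dim_col (mat_sum n F I) = n"
  by (simp_all add: mat_sum_def)

lemma index_mat_sum [simp]:
  "r < n \<Longrightarrow> s < n \<Longrightarrow> mat_sum n F I $$ (r, s) = (\<Sum>i\<in>I. F i $$ (r, s))"
  by (simp add: mat_sum_def)

lemma mat_sum_cong: "(\<And>i. i \<in> I \<Longrightarrow> F i = F' i) \<Longrightarrow> mat_sum n F I = mat_sum n F' I"
  by (simp add: mat_sum_def)

lemma mult_mat_sum:
  assumes X: "X \<in> carrier_mat n n" and F: "\<And>i. i \<in> I \<Longrightarrow> F i \<in> carrier_mat n n"
  shows "X * mat_sum n F I = mat_sum n (\<lambda>i. X * F i) I"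
proof (rule eq_matI)
  fix r s assume "r < dim_row (mat_sum n (\<lambda>i. X * F i) I)" "s < dim_col (mat_sum n (\<lambda>i. X * F i) I)"
  then have r: "r < n" and s: "s < n" by simp_all
  have "(X * mat_sum n F I) $$ (r, s) = (\<Sum>l<n. X $$ (r, l) * (\<Sum>i\<in>I. F i $$ (l, s)))"
    using X r s by (simp add: scalar_prod_def lessThan_atLeast0)
  also have "\<dots> = (\<Sum>i\<in>I. \<Sum>l<n. X $$ (r, l) * F i $$ (l, s))"
    by (simp add: sum_distrib_left sum.swap[of _ I])
  also have "\<dots> = mat_sum n (\<lambda>i. X * F i) I $$ (r, s)"
    using r s by (simp add: index_mult_mat_square[OF X F r s])
  finally show "(X * mat_sum n F I) $$ (r, s) = mat_sum n (\<lambda>i. X * F i) I $$ (r, s)" .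
qed (use X in auto)

lemma mat_sum_mult:
  assumes X: "X \<in> carrier_mat n n" and F: "\<And>i. i \<in> I \<Longrightarrow> F i \<in> carrier_mat n n"
  shows "mat_sum n F I * X = mat_sum n (\<lambda>i. F i * X) I"
proof (rule eq_matI)
  fix r s assume "r < dim_row (mat_sum n (\<lambda>i. F i * X) I)" "s < dim_col (mat_sum n (\<lambda>i. F i * X) I)"
  then have r: "r < n" and s: "s < n" by simp_all
  have "(mat_sum n F I * X) $$ (r, s) = (\<Sum>l<n. (\<Sum>i\<in>I. F i $$ (r, l)) * X $$ (l, s))"
    using X r s by (simp add: scalar_prod_def lessThan_atLeast0)
  also have "\<dots> = (\<Sum>i\<in>I. \<Sum>l<n. F i $$ (r, l) * X $$ (l, s))"
    by (simp add: sum_distrib_right sum.swap[of _ I])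
  also have "\<dots> = mat_sum n (\<lambda>i. F i * X) I $$ (r, s)"
    using r s by (simp add: index_mult_mat_square[OF F X r s])
  finally show "(mat_sum n F I * X) $$ (r, s) = mat_sum n (\<lambda>i. F i * X) I $$ (r, s)" .
qed (use X in auto)

lemma mat_sum_smult_const:
  "Y \<in> carrier_mat n n \<Longrightarrow> mat_sum n (\<lambda>i. c i \<cdot>\<^sub>m Y) I = (\<Sum>i\<in>I. c i) \<cdot>\<^sub>m Y"
  by (rule eq_matI) (auto simp: sum_distrib_right)

lemma smult_mat_sum:
  assumes "\<And>i. i \<in> I \<Longrightarrow> F i \<in> carrier_mat n n"
  shows "a \<cdot>\<^sub>m mat_sum n F I = mat_sum n (\<lambda>i. a \<cdot>\<^sub>m F i) I"
proof (rule eq_matI)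
  fix r s assume "r < dim_row (mat_sum n (\<lambda>i. a \<cdot>\<^sub>m F i) I)" "s < dim_col (mat_sum n (\<lambda>i. a \<cdot>\<^sub>m F i) I)"
  then show "(a \<cdot>\<^sub>m mat_sum n F I) $$ (r, s) = mat_sum n (\<lambda>i. a \<cdot>\<^sub>m F i) I $$ (r, s)"
  proof (simp add: sum_distrib_left, intro sum.cong refl)
    fix i assume "i \<in> I"
    then show "a * F i $$ (r, s) = (a \<cdot>\<^sub>m F i) $$ (r, s)" using assms[of i] \<open>r < _\<close> \<open>s < _\<close> by auto
  qed
qed simp_all

lemma mat_sum_shift_periodic:
  "F k = F 0 \<Longrightarrow> mat_sum n (\<lambda>m. F (Suc m)) {..<k} = mat_sum n F {..<k}"
  by (simp add: mat_sum_def sum_lessThan_shift_periodic[of "\<lambda>m. F m $$ _"])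

lemma mat_sum_mult_vec:
  assumes w: "w \<in> carrier_vec n" and F: "\<And>i. i \<in> I \<Longrightarrow> F i \<in> carrier_mat n n"
  shows "mat_sum n F I *\<^sub>v w = vec n (\<lambda>r. \<Sum>i\<in>I. (F i *\<^sub>v w) $ r)"
proof (rule eq_vecI)
  fix r assume "r < dim_vec (vec n (\<lambda>r. \<Sum>i\<in>I. (F i *\<^sub>v w) $ r))"
  then have r: "r < n" by simp
  have "(mat_sum n F I *\<^sub>v w) $ r = (\<Sum>i\<in>I. \<Sum>l<n. F i $$ (r, l) * w $ l)"
    using r w by (simp add: scalar_prod_def lessThan_atLeast0 sum_distrib_right sum.swap[of _ I])
  also have "\<dots> = (\<Sum>i\<in>I. (F i *\<^sub>v w) $ r)"
  proof (intro sum.cong refl)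
    fix i assume "i \<in> I"
    then show "(\<Sum>l<n. F i $$ (r, l) * w $ l) = (F i *\<^sub>v w) $ r"
      using r w F[of i] by (simp add: scalar_prod_def lessThan_atLeast0)
  qed
  finally show "(mat_sum n F I *\<^sub>v w) $ r = vec n (\<lambda>r. \<Sum>i\<in>I. (F i *\<^sub>v w) $ r) $ r"
    using r by simp
qed simp

lemma mat_sum_delta:
  assumes "finite I" "t \<in> I" "A \<in> carrier_mat n n"
  shows "mat_sum n (\<lambda>i. if i = t then A else 0\<^sub>m n n) I = A"
  by (rule eq_matI) (use assms in \<open>auto simp: if_distrib[of "\<lambda>M. M $$ _"] cong: if_cong\<close>)

lemma mat_sum_reindex:
  "inj_on g I \<Longrightarrow> mat_sum n F (g ` I) = mat_sum n (\<lambda>i. F (g i)) I"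
  by (simp add: mat_sum_def sum.reindex)

lemma mat_sum_product:
  "mat_sum n (\<lambda>p. F (fst p) (snd p)) (S \<times> T) = mat_sum n (\<lambda>s. mat_sum n (F s) T) S"
  by (rule eq_matI) (simp_all add: sum.cartesian_product case_prod_beta)

section \<open>Counting orthogonal idempotents\<close>

lemma wide_mat_nontrivial_kernel:
  fixes B :: "'a :: field mat"
  assumes B: "B \<in> carrier_mat n m" and nm: "n < m"
  obtains x where "x \<in> carrier_vec m" "x \<noteq> 0\<^sub>v m" "B *\<^sub>v x = 0\<^sub>v n"
proof -
  define V where "V = mat m m (\<lambda>(i, j). if i < n then B $$ (i, j) else 0)"
  have VC: "V \<in> carrier_mat m m" by (simp add: V_def)
  have V_rows: "V = mat\<^sub>r m m (\<lambda>i. if i = n then 0\<^sub>v m else row V i)"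
    by (rule eq_matI) (auto simp: V_def)
  have "det (mat\<^sub>r m m (\<lambda>i. if i = n then 0\<^sub>v m else row V i)) = 0"
    using nm VC by (intro det_row_0) auto
  then have "det V = 0"
    by (subst V_rows)
  then obtain x where x: "x \<in> carrier_vec m" "x \<noteq> 0\<^sub>v m" "V *\<^sub>v x = 0\<^sub>v m"
    using det_0_iff_vec_prod_zero[OF VC] by blast
  have "B *\<^sub>v x = 0\<^sub>v n"
  proof (rule eq_vecI)
    fix i assume "i < dim_vec (0\<^sub>v n)"
    then have i: "i < n" by simp
    have "(B *\<^sub>v x) $ i = (V *\<^sub>v x) $ i"
      using B x(1) i nm by (simp add: V_def scalar_prod_def)
    then show "(B *\<^sub>v x) $ i = 0\<^sub>v n $ i" using x(3) i nm by simp
  qed (use B in simp)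
  then show ?thesis using that x by blast
qed

lemma biorthogonal_family_length_le:
  fixes w :: "nat \<Rightarrow> 'a :: field vec"
  assumes w: "\<And>c. c < m \<Longrightarrow> w c \<in> carrier_vec n" and w0: "\<And>c. c < m \<Longrightarrow> w c \<noteq> 0\<^sub>v n"
    and M: "\<And>s. s < m \<Longrightarrow> M s \<in> carrier_mat n n"
    and dual: "\<And>s c. s < m \<Longrightarrow> c < m \<Longrightarrow> M s *\<^sub>v w c = (if c = s then w c else 0\<^sub>v n)"
  shows "m \<le> n"
proof (rule ccontr)
  assume "\<not> m \<le> n"
  define W where "W = mat n m (\<lambda>(i, c). w c $ i)"
  have WC: "W \<in> carrier_mat n m" by (simp add: W_def)
  have "n < m" using \<open>\<not> m \<le> n\<close> by simp
  then obtain x where x: "x \<in> carrier_vec m" "x \<noteq> 0\<^sub>v m" "W *\<^sub>v x = 0\<^sub>v n"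
    using wide_mat_nontrivial_kernel[OF WC] by blast
  have "x $ s = 0" if s: "s < m" for s
  proof -
    have "M s * W = mat n m (\<lambda>(i, c). (M s *\<^sub>v w c) $ i)"
      unfolding W_def by (rule mult_mat_cols[OF M[OF s] w])
    also have "\<dots> = mat n m (\<lambda>(i, c). if c = s then w s $ i else 0)"
      by (rule eq_matI) (simp_all add: dual[OF s])
    finally have MW: "M s * W = mat n m (\<lambda>(i, c). if c = s then w s $ i else 0)" .
    have "0\<^sub>v n = M s *\<^sub>v (W *\<^sub>v x)"
      using x(3) M[OF s] by simp
    also have "\<dots> = (M s * W) *\<^sub>v x"
      using x(1) M[OF s] WC by simp
    also have "\<dots> = x $ s \<cdot>\<^sub>v w s"
      unfolding MW using s x(1) w[OF s]
      by (auto simp: scalar_prod_def if_distrib[of "(*) _"] mult.commute cong: if_cong intro!: eq_vecI)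
    finally have "x $ s \<cdot>\<^sub>v w s = 0\<^sub>v n" by simp
    then have "x $ s \<cdot>\<^sub>v w s = 0 \<cdot>\<^sub>v w s"
      using w[OF s] by (auto intro!: eq_vecI)
    then show ?thesis
      using smult_vec_cancel[OF w[OF s] w0[OF s]] by blast
  qed
  then have "x = 0\<^sub>v m" using x(1) by (intro eq_vecI) auto
  then show False using x(2) by simp
qed

lemma card_orthogonal_idempotents_le:
  fixes Q :: "'i \<Rightarrow> 'a :: field mat"
  assumes T: "finite T" and QC: "\<And>t. t \<in> T \<Longrightarrow> Q t \<in> carrier_mat n n"
    and Q0: "\<And>t. t \<in> T \<Longrightarrow> Q t \<noteq> 0\<^sub>m n n"
    and orth: "\<And>s t. s \<in> T \<Longrightarrow> t \<in> T \<Longrightarrow> Q s * Q t = (if s = t then Q t else 0\<^sub>m n n)"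
  shows "card T \<le> n"
proof -
  obtain g where g: "bij_betw g {..<card T} T"
    using ex_bij_betw_nat_finite[OF T] by (metis atLeast0LessThan)
  have gT: "g c \<in> T" if "c < card T" for c
    using g that by (auto dest: bij_betwE)
  have g_eq: "g s = g c \<longleftrightarrow> s = c" if "s < card T" "c < card T" for s c
    using g that by (auto simp: bij_betw_def inj_on_def)
  have "\<forall>t\<in>T. \<exists>j. j < n \<and> col (Q t) j \<noteq> 0\<^sub>v n"
    using nonzero_mat_has_nonzero_col[OF QC Q0] by metis
  then obtain j where j: "\<And>t. t \<in> T \<Longrightarrow> j t < n \<and> col (Q t) (j t) \<noteq> 0\<^sub>v n"
    using bchoice by metis
  have QgC: "Q (g c) \<in> carrier_mat n n" and col_carrier: "col (Q (g c)) (j (g c)) \<in> carrier_vec n"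
    if "c < card T" for c
    using QC[OF gT[OF that]] by (auto simp: carrier_vecI)
  show ?thesis
  proof (rule biorthogonal_family_length_le[where w = "\<lambda>c. col (Q (g c)) (j (g c))" and M = "\<lambda>s. Q (g s)"])
    fix s c assume s: "s < card T" and c: "c < card T"
    have "Q (g s) *\<^sub>v col (Q (g c)) (j (g c)) = col (Q (g s) * Q (g c)) (j (g c))"
      using col_mult2[OF QC[OF gT[OF s]] QC[OF gT[OF c]], of "j (g c)"] j[OF gT[OF c]] by simp
    then show "Q (g s) *\<^sub>v col (Q (g c)) (j (g c)) = (if c = s then col (Q (g c)) (j (g c)) else 0\<^sub>v n)"
      using orth[OF gT[OF s] gT[OF c]] g_eq[OF s c] j[OF gT[OF c]] by auto
  qed (use QgC col_carrier gT j in auto)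
qed

section \<open>Resolutions of the identity by eigenprojections\<close>

definition resolution_of_identity :: "nat \<Rightarrow> 'i set \<Rightarrow> ('i \<Rightarrow> 'a :: comm_ring_1 mat) \<Rightarrow> bool" where
  "resolution_of_identity n T Q \<longleftrightarrow> finite T \<and> (\<forall>t\<in>T. Q t \<in> carrier_mat n n)
     \<and> mat_sum n Q T = 1\<^sub>m n \<and> (\<forall>s\<in>T. \<forall>t\<in>T. Q s * Q t = (if s = t then Q t else 0\<^sub>m n n))"

lemma resolution_of_identity_refine:
  assumes P: "resolution_of_identity n S P" and Q: "resolution_of_identity n T Q"
    and comm: "\<And>s t. s \<in> S \<Longrightarrow> t \<in> T \<Longrightarrow> P s * Q t = Q t * P s"
  shows "resolution_of_identity n ((\<lambda>(s, t). s # t) ` (S \<times> T)) (\<lambda>u. P (hd u) * Q (tl u))"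
proof -
  have PC: "\<And>s. s \<in> S \<Longrightarrow> P s \<in> carrier_mat n n" and QC: "\<And>t. t \<in> T \<Longrightarrow> Q t \<in> carrier_mat n n"
    using P Q by (auto simp: resolution_of_identity_def)
  have inj: "inj_on (\<lambda>(s, t). s # t) (S \<times> T)" by (auto simp: inj_on_def)
  have "mat_sum n (\<lambda>u. P (hd u) * Q (tl u)) ((\<lambda>(s, t). s # t) ` (S \<times> T))
      = mat_sum n (\<lambda>s. mat_sum n (\<lambda>t. P s * Q t) T) S"
    by (subst mat_sum_reindex[OF inj]) (simp add: case_prod_beta' mat_sum_product[of n "\<lambda>s t. P s * Q t"])
  also have "\<dots> = mat_sum n (\<lambda>s. P s * mat_sum n Q T) S"
    using PC QC by (intro mat_sum_cong) (simp add: mult_mat_sum)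
  also have "\<dots> = mat_sum n P S"
    using Q PC by (intro mat_sum_cong) (simp add: resolution_of_identity_def right_mult_one_mat[of _ n n])
  also have "\<dots> = 1\<^sub>m n"
    using P by (simp add: resolution_of_identity_def)
  finally have sum: "mat_sum n (\<lambda>u. P (hd u) * Q (tl u)) ((\<lambda>(s, t). s # t) ` (S \<times> T)) = 1\<^sub>m n" .
  have orth: "P s * Q t * (P s' * Q t') = (if s # t = s' # t' then P s' * Q t' else 0\<^sub>m n n)"
    if "s \<in> S" "t \<in> T" "s' \<in> S" "t' \<in> T" for s t s' t'
  proof -
    have C: "P s \<in> carrier_mat n n" "P s' \<in> carrier_mat n n" "Q t \<in> carrier_mat n n" "Q t' \<in> carrier_mat n n"
      using that PC QC by auto
    have "P s * Q t * (P s' * Q t') = P s * P s' * (Q t * Q t')"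
      using that C comm by (intro mult_mat_commute_middle) auto
    then show ?thesis
      using that P Q C by (auto simp: resolution_of_identity_def)
  qed
  have "P s * Q t \<in> carrier_mat n n" if "s \<in> S" "t \<in> T" for s t
    using PC[OF that(1)] QC[OF that(2)] by (rule mult_carrier_mat)
  then show ?thesis
    using P Q sum orth unfolding resolution_of_identity_def by auto
qed

lemma sum_powers_root_of_unity:
  fixes z :: complex
  assumes "z ^ k = 1" "0 < k"
  shows "(\<Sum>m<k. z ^ m) = (if z = 1 then of_nat k else 0)"
  using assms by (simp add: sum_gp_strict)

lemma sum_roots_of_unity_inverse_power:
  assumes "m < k"
  shows "(\<Sum>\<omega> | \<omega> ^ k = 1. inverse \<omega> ^ m) = (if m = 0 then of_nat k else (0 :: complex))"
proof -
  define \<zeta> where "\<zeta> j = cis (2 * pi * real j / real k)" for j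
  have k: "0 < k" using assms by simp
  have bij: "bij_betw \<zeta> {..<k} {\<omega>. \<omega> ^ k = 1}"
    unfolding \<zeta>_def by (rule bij_betw_roots_unity[OF k])
  have inv_bij: "bij_betw inverse {\<omega>::complex. \<omega> ^ k = 1} {\<omega>. \<omega> ^ k = 1}"
    by (rule bij_betw_byWitness[of _ inverse]) (auto simp: power_inverse)
  have "(\<Sum>\<omega> | \<omega> ^ k = 1. inverse \<omega> ^ m) = (\<Sum>\<omega> | \<omega> ^ k = 1. \<omega> ^ m :: complex)"
    using sum.reindex_bij_betw[OF inv_bij, of "\<lambda>\<omega>. \<omega> ^ m"] by simp
  also have "\<dots> = (\<Sum>j<k. \<zeta> j ^ m)"
    using sum.reindex_bij_betw[OF bij, of "\<lambda>\<omega>. \<omega> ^ m"] by simp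
  also have "\<dots> = (\<Sum>j<k. \<zeta> m ^ j)"
    by (simp add: \<zeta>_def DeMoivre mult_ac)
  also have "\<dots> = (if m = 0 then of_nat k else 0)"
  proof -
    have "\<zeta> m ^ k = 1" using bij assms by (auto simp: bij_betw_def)
    moreover have "\<zeta> m = 1 \<longleftrightarrow> m = 0"
      using bij assms k unfolding bij_betw_def inj_on_def by (force simp: \<zeta>_def)
    ultimately show ?thesis using k by (simp add: sum_powers_root_of_unity)
  qed
  finally show ?thesis .
qed

locale finite_order_mat =
  fixes n k :: nat and U :: "complex mat"
  assumes U_carrier [simp]: "U \<in> carrier_mat n n" and k_pos: "0 < k" and U_pow_k: "U ^\<^sub>m k = 1\<^sub>m n"
begin

definition eigenprojection :: "complex \<Rightarrow> complex mat" where
  "eigenprojection \<omega> = mat_sum n (\<lambda>m. (inverse \<omega> ^ m / of_nat k) \<cdot>\<^sub>m U ^\<^sub>m m) {..<k}"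

lemma dim_U [simp]: "dim_row U = n" "dim_col U = n"
  using carrier_matD[OF U_carrier] by simp_all

lemma eigenprojection_carrier [simp]: "eigenprojection \<omega> \<in> carrier_mat n n"
  and dim_eigenprojection [simp]: "dim_row (eigenprojection \<omega>) = n" "dim_col (eigenprojection \<omega>) = n"
  by (simp_all add: eigenprojection_def)

lemma mult_eigenprojection:
  assumes \<omega>: "\<omega> ^ k = 1"
  shows "U * eigenprojection \<omega> = \<omega> \<cdot>\<^sub>m eigenprojection \<omega>"
proof -
  define F where "F m = (inverse \<omega> ^ m / of_nat k) \<cdot>\<^sub>m U ^\<^sub>m m" for m
  have F_carrier: "F m \<in> carrier_mat n n" for m by (simp add: F_def)
  have \<omega>0: "\<omega> \<noteq> 0" using \<omega> k_pos by (metis power_0_left zero_neq_one less_not_refl2)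
  have "U * eigenprojection \<omega> = mat_sum n (\<lambda>m. U * F m) {..<k}"
    unfolding eigenprojection_def F_def[symmetric] by (rule mult_mat_sum) (simp_all add: F_carrier)
  also have "\<dots> = mat_sum n (\<lambda>m. \<omega> \<cdot>\<^sub>m F (Suc m)) {..<k}"
  proof (rule mat_sum_cong)
    fix m
    have "U * F m = (inverse \<omega> ^ m / of_nat k) \<cdot>\<^sub>m U ^\<^sub>m Suc m"
      by (simp add: F_def mult_smult_distrib[of _ n n _ n] pow_mat_commute[of U n U])
    also have "\<dots> = \<omega> \<cdot>\<^sub>m F (Suc m)"
      using \<omega>0 by (simp add: F_def smult_smult_mat field_simps)
    finally show "U * F m = \<omega> \<cdot>\<^sub>m F (Suc m)" .
  qed
  also have "\<dots> = \<omega> \<cdot>\<^sub>m mat_sum n (\<lambda>m. F (Suc m)) {..<k}"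
    by (rule smult_mat_sum[symmetric]) (simp add: F_carrier)
  also have "mat_sum n (\<lambda>m. F (Suc m)) {..<k} = eigenprojection \<omega>"
  proof -
    have "F k = F 0" using \<omega> by (simp add: F_def U_pow_k power_inverse)
    then show ?thesis unfolding eigenprojection_def F_def[symmetric] by (rule mat_sum_shift_periodic)
  qed
  finally show ?thesis .
qed

lemma pow_mult_eigenprojection:
  assumes \<omega>: "\<omega> ^ k = 1"
  shows "U ^\<^sub>m m * eigenprojection \<omega> = \<omega> ^ m \<cdot>\<^sub>m eigenprojection \<omega>"
proof (induction m)
  case 0
  then show ?case by (rule eq_matI) (auto simp:)
next
  case (Suc m)
  have "U ^\<^sub>m Suc m * eigenprojection \<omega> = U ^\<^sub>m m * (\<omega> \<cdot>\<^sub>m eigenprojection \<omega>)"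
    using assoc_mult_mat[OF pow_carrier_mat[OF U_carrier] U_carrier eigenprojection_carrier]
    by (simp add: mult_eigenprojection[OF \<omega>])
  also have "\<dots> = \<omega> ^ Suc m \<cdot>\<^sub>m eigenprojection \<omega>"
    by (simp add: mult_smult_distrib[of _ n n _ n] Suc.IH smult_smult_mat mult.commute)
  finally show ?case .
qed

lemma eigenprojection_mult:
  assumes \<omega>: "\<omega> ^ k = 1" and \<omega>': "\<omega>' ^ k = 1"
  shows "eigenprojection \<omega> * eigenprojection \<omega>' = (if \<omega> = \<omega>' then eigenprojection \<omega>' else 0\<^sub>m n n)"
proof -
  define z where "z = \<omega>' * inverse \<omega>"
  have "eigenprojection \<omega> * eigenprojection \<omega>'
      = mat_sum n (\<lambda>m. ((inverse \<omega> ^ m / of_nat k) * \<omega>' ^ m) \<cdot>\<^sub>m eigenprojection \<omega>') {..<k}"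
    unfolding eigenprojection_def[of \<omega>]
    by (subst mat_sum_mult, simp, simp, intro mat_sum_cong)
      (simp add: mult_smult_assoc_mat[of _ n n _ n] pow_mult_eigenprojection[OF \<omega>'] smult_smult_mat)
  also have "\<dots> = ((\<Sum>m<k. z ^ m) / of_nat k) \<cdot>\<^sub>m eigenprojection \<omega>'"
    by (simp add: mat_sum_smult_const z_def sum_divide_distrib power_mult_distrib mult.commute)
  also have "\<dots> = (if \<omega> = \<omega>' then eigenprojection \<omega>' else 0\<^sub>m n n)"
  proof -
    have "z ^ k = 1" using \<omega> \<omega>' by (simp add: z_def power_mult_distrib power_inverse)
    moreover have "z = 1 \<longleftrightarrow> \<omega> = \<omega>'"
      using \<omega> k_pos by (auto simp: z_def field_simps power_0_left)
    ultimately show ?thesis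
      using k_pos by (auto simp: sum_powers_root_of_unity intro!: eq_matI)
  qed
  finally show ?thesis .
qed

lemma sum_eigenprojections: "mat_sum n eigenprojection {\<omega>. \<omega> ^ k = 1} = 1\<^sub>m n"
proof (rule eq_matI)
  fix r s assume "r < dim_row (1\<^sub>m n)" "s < dim_col (1\<^sub>m n)"
  then have r: "r < n" and s: "s < n" by simp_all
  have "mat_sum n eigenprojection {\<omega>. \<omega> ^ k = 1} $$ (r, s)
      = (\<Sum>\<omega> | \<omega> ^ k = 1. \<Sum>m<k. inverse \<omega> ^ m / of_nat k * (U ^\<^sub>m m) $$ (r, s))"
    using r s by (simp add: eigenprojection_def)
  also have "\<dots> = (\<Sum>m<k. (\<Sum>\<omega> | \<omega> ^ k = 1. inverse \<omega> ^ m) / of_nat k * (U ^\<^sub>m m) $$ (r, s))"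
    by (subst sum.swap) (simp add: sum_divide_distrib sum_distrib_right)
  also have "\<dots> = (\<Sum>m<k. if m = 0 then 1\<^sub>m n $$ (r, s) else 0)"
    using k_pos by (intro sum.cong refl) (simp add: sum_roots_of_unity_inverse_power)
  also have "\<dots> = 1\<^sub>m n $$ (r, s)"
    using k_pos by (simp add: sum.delta)
  finally show "mat_sum n eigenprojection {\<omega>. \<omega> ^ k = 1} $$ (r, s) = 1\<^sub>m n $$ (r, s)" .
qed simp_all

lemma eigenprojection_commute:
  assumes X: "X \<in> carrier_mat n n" and comm: "U * X = X * U"
  shows "eigenprojection \<omega> * X = X * eigenprojection \<omega>"
proof -
  have "(c \<cdot>\<^sub>m U ^\<^sub>m m) * X = X * (c \<cdot>\<^sub>m U ^\<^sub>m m)" for c m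
    using pow_mat_commute[OF U_carrier X comm]
    by (simp add: mult_smult_assoc_mat[of _ n n _ n] mult_smult_distrib[of _ n n _ n] X)
  then show ?thesis
    unfolding eigenprojection_def using X by (simp add: mat_sum_mult mult_mat_sum)
qed

lemma resolution_of_identity_eigenprojections:
  "resolution_of_identity n {\<omega>. \<omega> ^ k = 1} eigenprojection"
  using k_pos by (simp add: resolution_of_identity_def finite_roots_unity sum_eigenprojections
      eigenprojection_mult)

end

lemma (in finite_order_mat) refine_by_eigenprojections:
  assumes "resolution_of_identity n T Q" and "\<And>t. t \<in> T \<Longrightarrow> U * Q t = Q t * U"
  shows "resolution_of_identity n ((\<lambda>(\<omega>, t). \<omega> # t) ` ({\<omega>. \<omega> ^ k = 1} \<times> T))
           (\<lambda>u. eigenprojection (hd u) * Q (tl u))"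
  using assms by (intro resolution_of_identity_refine resolution_of_identity_eigenprojections
      eigenprojection_commute) (auto simp: resolution_of_identity_def)

section \<open>Weights of commuting families of matrices\<close>

text \<open>The weights of a family \<open>\<rho>\<close> are the eigenvalue functions of its common eigenvectors; for a
  representation of an abelian group they are the characters of its one-dimensional constituents.\<close>

definition weights :: "nat \<Rightarrow> 'a set \<Rightarrow> ('a \<Rightarrow> 'b :: field mat) \<Rightarrow> ('a \<Rightarrow> 'b) set" where
  "weights n A \<rho> = {\<psi> \<in> extensional A. \<exists>w\<in>carrier_vec n. w \<noteq> 0\<^sub>v n \<and> (\<forall>a\<in>A. \<rho> a *\<^sub>v w = \<psi> a \<cdot>\<^sub>v w)}"

lemma weights_extensional: "\<psi> \<in> weights n A \<rho> \<Longrightarrow> \<psi> \<in> extensional A"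
  by (simp add: weights_def)

locale joint_eigenresolution =
  fixes n :: nat and A :: "'a set" and \<rho> :: "'a \<Rightarrow> 'b :: field mat"
    and T :: "'i set" and Q :: "'i \<Rightarrow> 'b mat" and \<chi> :: "'i \<Rightarrow> 'a \<Rightarrow> 'b"
  assumes resolution: "resolution_of_identity n T Q"
    and rho_carrier: "\<And>a. a \<in> A \<Longrightarrow> \<rho> a \<in> carrier_mat n n"
    and eigen: "\<And>a t. a \<in> A \<Longrightarrow> t \<in> T \<Longrightarrow> \<rho> a * Q t = \<chi> t a \<cdot>\<^sub>m Q t"
begin

lemma finite_T: "finite T"
  and Q_carrier: "t \<in> T \<Longrightarrow> Q t \<in> carrier_mat n n"
  and sum_Q: "mat_sum n Q T = 1\<^sub>m n"
  and Q_mult_Q: "s \<in> T \<Longrightarrow> t \<in> T \<Longrightarrow> Q s * Q t = (if s = t then Q t else 0\<^sub>m n n)"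
  using resolution by (auto simp: resolution_of_identity_def)

lemma rho_expansion:
  assumes a: "a \<in> A"
  shows "\<rho> a = mat_sum n (\<lambda>t. \<chi> t a \<cdot>\<^sub>m Q t) T"
proof -
  have "\<rho> a = \<rho> a * mat_sum n Q T" using rho_carrier[OF a] by (simp add: sum_Q)
  also have "\<dots> = mat_sum n (\<lambda>t. \<chi> t a \<cdot>\<^sub>m Q t) T"
    using rho_carrier[OF a] Q_carrier by (simp add: mult_mat_sum eigen[OF a] cong: mat_sum_cong)
  finally show ?thesis .
qed

lemma Q_mult_rho:
  assumes a: "a \<in> A" and t: "t \<in> T"
  shows "Q t * \<rho> a = \<chi> t a \<cdot>\<^sub>m Q t"
proof -
  have "Q t * \<rho> a = mat_sum n (\<lambda>s. \<chi> s a \<cdot>\<^sub>m (Q t * Q s)) T"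
    unfolding rho_expansion[OF a] using Q_carrier t
    by (simp add: mult_mat_sum mult_smult_distrib[of _ n n _ n] cong: mat_sum_cong)
  also have "\<dots> = mat_sum n (\<lambda>s. if s = t then \<chi> t a \<cdot>\<^sub>m Q t else 0\<^sub>m n n) T"
    using Q_mult_Q[OF t] by (intro mat_sum_cong) auto
  also have "\<dots> = \<chi> t a \<cdot>\<^sub>m Q t"
    using finite_T t Q_carrier[OF t] by (simp add: mat_sum_delta)
  finally show ?thesis .
qed

lemma restrict_eigenvalues_in_weights:
  assumes t: "t \<in> T" and Q0: "Q t \<noteq> 0\<^sub>m n n"
  shows "restrict (\<chi> t) A \<in> weights n A \<rho>"
proof -
  obtain j where j: "j < n" "col (Q t) j \<noteq> 0\<^sub>v n"
    using nonzero_mat_has_nonzero_col[OF Q_carrier[OF t] Q0] .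
  have "\<rho> a *\<^sub>v col (Q t) j = \<chi> t a \<cdot>\<^sub>v col (Q t) j" if a: "a \<in> A" for a
    using col_mult2[OF rho_carrier[OF a] Q_carrier[OF t] j(1)] j(1) Q_carrier[OF t]
    by (simp add: eigen[OF a t])
  then show ?thesis
    unfolding weights_def using j Q_carrier[OF t] by force
qed

lemma weights_subset:
  "weights n A \<rho> \<subseteq> (\<lambda>t. restrict (\<chi> t) A) ` {t \<in> T. Q t \<noteq> 0\<^sub>m n n}"
proof
  fix \<psi> assume "\<psi> \<in> weights n A \<rho>"
  then obtain w where \<psi>: "\<psi> \<in> extensional A" and w: "w \<in> carrier_vec n" "w \<noteq> 0\<^sub>v n"
    and eig: "\<And>a. a \<in> A \<Longrightarrow> \<rho> a *\<^sub>v w = \<psi> a \<cdot>\<^sub>v w"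
    unfolding weights_def by blast
  have "\<exists>t\<in>T. Q t *\<^sub>v w \<noteq> 0\<^sub>v n"
  proof (rule ccontr)
    assume "\<not> ?thesis"
    then have "mat_sum n Q T *\<^sub>v w = 0\<^sub>v n"
      using w(1) Q_carrier by (auto simp: mat_sum_mult_vec intro!: eq_vecI)
    then show False using w by (simp add: sum_Q)
  qed
  then obtain t where t: "t \<in> T" and Qw: "Q t *\<^sub>v w \<noteq> 0\<^sub>v n" ..
  have "\<psi> a = \<chi> t a" if a: "a \<in> A" for a
  proof (rule smult_vec_cancel[of "Q t *\<^sub>v w" n])
    have "Q t *\<^sub>v (\<rho> a *\<^sub>v w) = (Q t * \<rho> a) *\<^sub>v w"
      using Q_carrier[OF t] rho_carrier[OF a] w(1) by simp
    then show "\<psi> a \<cdot>\<^sub>v (Q t *\<^sub>v w) = \<chi> t a \<cdot>\<^sub>v (Q t *\<^sub>v w)"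
      using Q_carrier[OF t] w(1) by (simp add: eig[OF a] Q_mult_rho[OF a t] mult_mat_vec smult_mat_mult_vec)
  qed (use Q_carrier[OF t] w(1) Qw in auto)
  then have "\<psi> = restrict (\<chi> t) A"
    using \<psi> by (auto simp: extensional_def)
  moreover have "Q t \<noteq> 0\<^sub>m n n" using Qw w(1) by auto
  ultimately show "\<psi> \<in> (\<lambda>t. restrict (\<chi> t) A) ` {t \<in> T. Q t \<noteq> 0\<^sub>m n n}" using t by blast
qed

lemma finite_weights: "finite (weights n A \<rho>)"
  using finite_subset[OF weights_subset] finite_T by simp

lemma card_weights_le: "card (weights n A \<rho>) \<le> n"
proof -
  have "card (weights n A \<rho>) \<le> card ((\<lambda>t. restrict (\<chi> t) A) ` {t \<in> T. Q t \<noteq> 0\<^sub>m n n})"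
    using finite_T by (intro card_mono[OF _ weights_subset]) simp
  also have "\<dots> \<le> card {t \<in> T. Q t \<noteq> 0\<^sub>m n n}"
    using finite_T by (intro card_image_le) simp
  also have "\<dots> \<le> n"
    using finite_T Q_carrier Q_mult_Q by (intro card_orthogonal_idempotents_le[of _ Q]) auto
  finally show ?thesis .
qed

lemma eq_if_weights_eq:
  assumes a: "a \<in> A" and b: "b \<in> A" and eq: "\<And>\<psi>. \<psi> \<in> weights n A \<rho> \<Longrightarrow> \<psi> a = \<psi> b"
  shows "\<rho> a = \<rho> b"
proof -
  have "\<chi> t a \<cdot>\<^sub>m Q t = \<chi> t b \<cdot>\<^sub>m Q t" if t: "t \<in> T" for t
  proof (cases "Q t = 0\<^sub>m n n")
    case False
    then show ?thesis
      using eq[OF restrict_eigenvalues_in_weights[OF t False]] a b by simp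
  qed simp
  then show ?thesis
    unfolding rho_expansion[OF a] rho_expansion[OF b] by (rule mat_sum_cong)
qed

end

locale commuting_finite_order_family =
  fixes n k :: nat and A :: "'a set" and \<rho> :: "'a \<Rightarrow> complex mat"
  assumes finite_A: "finite A" and k_pos: "0 < k"
    and carrier: "\<And>a. a \<in> A \<Longrightarrow> \<rho> a \<in> carrier_mat n n"
    and pow_k: "\<And>a. a \<in> A \<Longrightarrow> \<rho> a ^\<^sub>m k = 1\<^sub>m n"
    and commute: "\<And>a b. a \<in> A \<Longrightarrow> b \<in> A \<Longrightarrow> \<rho> a * \<rho> b = \<rho> b * \<rho> a"
begin

lemma finite_order_mat: "a \<in> A \<Longrightarrow> finite_order_mat n k (\<rho> a)"
  using carrier k_pos pow_k by unfold_locales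

lemma rho_mult_eigenprojection_mult:
  assumes a: "a \<in> A" and c: "c \<in> A" and X: "X \<in> carrier_mat n n"
  shows "\<rho> c * (finite_order_mat.eigenprojection n k (\<rho> a) \<omega> * X)
    = finite_order_mat.eigenprojection n k (\<rho> a) \<omega> * (\<rho> c * X)"
proof -
  interpret finite_order_mat n k "\<rho> a"
    by (rule finite_order_mat[OF a])
  have "\<rho> c * (eigenprojection \<omega> * X) = \<rho> c * eigenprojection \<omega> * X"
    using carrier[OF c] X by (simp add: assoc_mult_mat[of _ n n _ n _ n])
  also have "\<dots> = eigenprojection \<omega> * \<rho> c * X"
    using eigenprojection_commute[OF carrier commute[OF a], OF c c] by simp
  also have "\<dots> = eigenprojection \<omega> * (\<rho> c * X)"
    using carrier[OF c] X by (simp add: assoc_mult_mat[of _ n n _ n _ n])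
  finally show ?thesis .
qed

text \<open>The invariant of the inductive construction: the resolution diagonalises \<open>\<rho>\<close> on \<open>B\<close> and
  commutes with all of \<open>\<rho> ` A\<close>, so that the eigenprojections of a further \<open>\<rho> a\<close> can refine it.
  An index \<open>\<omega> # t\<close> records the eigenvalue \<open>\<omega>\<close> of the last matrix added.\<close>

definition eigenresolution_on ::
    "'a set \<Rightarrow> complex list set \<Rightarrow> (complex list \<Rightarrow> complex mat) \<Rightarrow> (complex list \<Rightarrow> 'a \<Rightarrow> complex) \<Rightarrow> bool"
  where "eigenresolution_on B T Q \<chi> \<longleftrightarrow> resolution_of_identity n T Q
    \<and> (\<forall>b\<in>B. \<forall>t\<in>T. \<rho> b * Q t = \<chi> t b \<cdot>\<^sub>m Q t) \<and> (\<forall>c\<in>A. \<forall>t\<in>T. \<rho> c * Q t = Q t * \<rho> c)"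

lemma eigenresolution_on_empty: "eigenresolution_on {} {[]} (\<lambda>_. 1\<^sub>m n) \<chi>"
proof -
  have "\<rho> c * 1\<^sub>m n = 1\<^sub>m n * \<rho> c" if "c \<in> A" for c
    using carrier[OF that] by simp
  then show ?thesis
    by (auto simp: eigenresolution_on_def resolution_of_identity_def intro!: eq_matI)
qed

lemma eigenresolution_on_insert:
  assumes a: "a \<in> A" and B: "B \<subseteq> A" and Q: "eigenresolution_on B T Q \<chi>"
  shows "eigenresolution_on (insert a B) ((\<lambda>(\<omega>, t). \<omega> # t) ` ({\<omega>. \<omega> ^ k = 1} \<times> T))
    (\<lambda>u. finite_order_mat.eigenprojection n k (\<rho> a) (hd u) * Q (tl u)) (\<lambda>u. (\<chi> (tl u))(a := hd u))"
    (is "eigenresolution_on _ ?T ?Q ?\<chi>")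
proof -
  interpret finite_order_mat n k "\<rho> a"
    by (rule finite_order_mat[OF a])
  have res: "resolution_of_identity n T Q"
    and eigen: "\<And>b t. b \<in> B \<Longrightarrow> t \<in> T \<Longrightarrow> \<rho> b * Q t = \<chi> t b \<cdot>\<^sub>m Q t"
    and Q_comm: "\<And>c t. c \<in> A \<Longrightarrow> t \<in> T \<Longrightarrow> \<rho> c * Q t = Q t * \<rho> c"
    using Q by (auto simp: eigenresolution_on_def)
  have QC: "Q t \<in> carrier_mat n n" if "t \<in> T" for t
    using res that by (simp add: resolution_of_identity_def)
  have through: "\<rho> c * ?Q (\<omega> # t) = eigenprojection \<omega> * (\<rho> c * Q t)" if "c \<in> A" "t \<in> T" for c \<omega> t
    using rho_mult_eigenprojection_mult[OF a that(1) QC[OF that(2)]] by simp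
  have "\<rho> b * ?Q u = ?\<chi> u b \<cdot>\<^sub>m ?Q u" if bB: "b \<in> insert a B" and uT: "u \<in> ?T" for b u
  proof -
    obtain \<omega> t where u: "u = \<omega> # t" and \<omega>: "\<omega> ^ k = 1" and t: "t \<in> T"
      using uT by auto
    show ?thesis
    proof (cases "b = a")
      case True
      have "\<rho> a * ?Q u = (\<rho> a * eigenprojection \<omega>) * Q t"
        using assoc_mult_mat[OF U_carrier eigenprojection_carrier QC[OF t]] by (simp add: u)
      also have "\<dots> = \<omega> \<cdot>\<^sub>m (eigenprojection \<omega> * Q t)"
        using mult_eigenprojection[OF \<omega>] mult_smult_assoc_mat[OF eigenprojection_carrier QC[OF t]] by simp
      finally show ?thesis using True by (simp add: u)
    next
      case False
      then have b: "b \<in> B" using bB by simp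
      then have "\<rho> b * ?Q u = eigenprojection \<omega> * (\<chi> t b \<cdot>\<^sub>m Q t)"
        using through[OF _ t, of b \<omega>] eigen[OF b t] B by (auto simp: u)
      also have "\<dots> = ?\<chi> u b \<cdot>\<^sub>m ?Q u"
        using False mult_smult_distrib[OF eigenprojection_carrier QC[OF t]] by (simp add: u)
      finally show ?thesis .
    qed
  qed
  moreover have "\<rho> c * ?Q u = ?Q u * \<rho> c" if c: "c \<in> A" and uT: "u \<in> ?T" for c u
  proof -
    obtain \<omega> t where u: "u = \<omega> # t" and t: "t \<in> T"
      using uT by auto
    show ?thesis
      using through[OF c t] Q_comm[OF c t] QC[OF t] carrier[OF c]
      by (simp add: u assoc_mult_mat[of _ n n _ n _ n])
  qed
  moreover have "resolution_of_identity n ?T ?Q"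
    by (rule refine_by_eigenprojections[OF res]) (simp add: Q_comm a)
  ultimately show ?thesis
    unfolding eigenresolution_on_def by blast
qed

lemma ex_joint_eigenresolution:
  obtains T :: "complex list set" and Q \<chi> where "joint_eigenresolution n A \<rho> T Q \<chi>"
proof -
  have "\<exists>T Q \<chi>. eigenresolution_on B T Q \<chi>" if "B \<subseteq> A" for B
    using finite_subset[OF that finite_A] that
  proof (induction B rule: finite_induct)
    case empty
    then show ?case using eigenresolution_on_empty by blast
  next
    case (insert a B)
    then show ?case using eigenresolution_on_insert[of a B] by blast
  qed
  then obtain T Q \<chi> where "eigenresolution_on A T Q \<chi>" by blast
  then have res: "resolution_of_identity n T Q"
    and eigen: "\<And>a t. a \<in> A \<Longrightarrow> t \<in> T \<Longrightarrow> \<rho> a * Q t = \<chi> t a \<cdot>\<^sub>m Q t"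
    unfolding eigenresolution_on_def by blast+
  show ?thesis
    by (rule that, rule joint_eigenresolution.intro[OF res carrier eigen])
qed

lemma finite_weights: "finite (weights n A \<rho>)"
  by (rule ex_joint_eigenresolution) (rule joint_eigenresolution.finite_weights)

lemma card_weights_le: "card (weights n A \<rho>) \<le> n"
  by (rule ex_joint_eigenresolution) (rule joint_eigenresolution.card_weights_le)

lemma eq_if_weights_eq:
  "a \<in> A \<Longrightarrow> b \<in> A \<Longrightarrow> (\<And>\<psi>. \<psi> \<in> weights n A \<rho> \<Longrightarrow> \<psi> a = \<psi> b) \<Longrightarrow> \<rho> a = \<rho> b"
  by (rule ex_joint_eigenresolution) (rule joint_eigenresolution.eq_if_weights_eq)

end

section \<open>Embeddings into symmetric groups\<close>

lemma permutes_conj_bij: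
  assumes e: "bij_betw e I X" and f: "bij_betw f X X"
  shows "(\<lambda>i. if i \<in> I then inv_into I e (f (e i)) else i) permutes I"
proof (rule bij_imp_permutes)
  have "bij_betw (inv_into I e \<circ> (f \<circ> e)) I I"
    by (rule bij_betw_trans[OF bij_betw_trans[OF e f] bij_betw_inv_into[OF e]])
  then show "bij_betw (\<lambda>i. if i \<in> I then inv_into I e (f (e i)) else i) I I"
    by (rule bij_betw_cong[THEN iffD1, rotated]) simp
qed simp

lemma (in group) embeds_in_sym_of_faithful_action:
  fixes act :: "'a \<Rightarrow> 'x \<Rightarrow> 'x"
  assumes X: "finite X" "card X \<le> n"
    and closed: "\<And>h x. h \<in> carrier G \<Longrightarrow> x \<in> X \<Longrightarrow> act h x \<in> X"
    and act_one: "\<And>x. x \<in> X \<Longrightarrow> act \<one> x = x"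
    and act_mult: "\<And>h k x. h \<in> carrier G \<Longrightarrow> k \<in> carrier G \<Longrightarrow> x \<in> X \<Longrightarrow> act (h \<otimes> k) x = act h (act k x)"
    and faithful: "\<And>h k. h \<in> carrier G \<Longrightarrow> k \<in> carrier G \<Longrightarrow> (\<And>x. x \<in> X \<Longrightarrow> act h x = act k x) \<Longrightarrow> h = k"
  shows "embeds_in_sym G n"
proof -
  define I where "I = {1..card X}"
  obtain e where e: "bij_betw e I X"
    using ex_bij_betw_nat_finite_1[OF X(1)] unfolding I_def by blast
  define e' where "e' = inv_into I e"
  have e': "bij_betw e' X I" unfolding e'_def by (rule bij_betw_inv_into[OF e])
  have e_e': "e (e' x) = x" if "x \<in> X" for x
    using e that unfolding e'_def by (simp add: bij_betw_def f_inv_into_f)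
  have eX: "e i \<in> X" if "i \<in> I" for i using e that by (auto dest: bij_betwE)
  define \<sigma> where "\<sigma> h i = (if i \<in> I then e' (act h (e i)) else i)" for h i
  have act_bij: "bij_betw (act h) X X" if h: "h \<in> carrier G" for h
    by (rule bij_betw_byWitness[where f' = "act (inv h)"])
      (use h in \<open>auto simp: act_mult[symmetric] act_one closed\<close>)
  have \<sigma>_perm: "\<sigma> h \<in> carrier (sym_group n)" if h: "h \<in> carrier G" for h
  proof -
    have "\<sigma> h permutes I"
      unfolding \<sigma>_def e'_def by (rule permutes_conj_bij[OF e act_bij[OF h]])
    then have "\<sigma> h permutes {1..n}" by (rule permutes_subset) (use X(2) in \<open>auto simp: I_def\<close>)
    then show ?thesis by (simp add: sym_group_carrier)
  qed
  have \<sigma>_mult: "\<sigma> (h \<otimes> k) = \<sigma> h \<circ> \<sigma> k" if "h \<in> carrier G" "k \<in> carrier G" for h k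
  proof
    fix i show "\<sigma> (h \<otimes> k) i = (\<sigma> h \<circ> \<sigma> k) i"
      using that e' eX closed e_e' by (auto simp: \<sigma>_def act_mult dest: bij_betwE)
  qed
  have "\<sigma> \<in> hom G (sym_group n)"
    using \<sigma>_perm \<sigma>_mult by (auto simp: hom_def sym_group_mult)
  moreover have "inj_on \<sigma> (carrier G)"
  proof (rule inj_onI)
    fix h k assume h: "h \<in> carrier G" and k: "k \<in> carrier G" and eq: "\<sigma> h = \<sigma> k"
    have "act h x = act k x" if x: "x \<in> X" for x
    proof -
      have "e' x \<in> I" using e' x by (auto dest: bij_betwE)
      then have "e' (act h x) = e' (act k x)"
        using fun_cong[OF eq, of "e' x"] e_e'[OF x] by (simp add: \<sigma>_def)
      then show ?thesis
        using e' closed[OF h x] closed[OF k x] by (auto simp: bij_betw_def inj_on_def)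
    qed
    then show "h = k" using faithful[OF h k] by blast
  qed
  ultimately show ?thesis unfolding embeds_in_sym_def by blast
qed

lemma (in group) cayley_embeds_in_sym: "finite (carrier G) \<Longrightarrow> embeds_in_sym G (card (carrier G))"
  by (rule embeds_in_sym_of_faithful_action[where act = "(\<otimes>)"])
    (auto simp: m_assoc dest: fun_cong[of _ _ \<one>])

text \<open>Matrix indices start at \<open>0\<close>, whereas \<open>sym_group N\<close> permutes \<open>{1..N}\<close>.\<close>

definition perm_mat :: "nat \<Rightarrow> (nat \<Rightarrow> nat) \<Rightarrow> 'a :: comm_ring_1 mat" where
  "perm_mat N \<sigma> = mat N N (\<lambda>(r, s). if Suc r = \<sigma> (Suc s) then 1 else 0)"

lemma perm_mat_carrier [simp]: "perm_mat N \<sigma> \<in> carrier_mat N N"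
  by (simp add: perm_mat_def)

lemma perm_mat_id: "perm_mat N id = 1\<^sub>m N"
  by (rule eq_matI) (auto simp: perm_mat_def)

lemma perm_mat_comp:
  assumes \<sigma>: "\<sigma> permutes {1..N}" and \<tau>: "\<tau> permutes {1..N}"
  shows "perm_mat N (\<sigma> \<circ> \<tau>) = perm_mat N \<sigma> * (perm_mat N \<tau> :: 'a :: comm_ring_1 mat)"
proof (rule eq_matI)
  fix r s assume "r < dim_row (perm_mat N \<sigma> * (perm_mat N \<tau> :: 'a mat))"
    "s < dim_col (perm_mat N \<sigma> * (perm_mat N \<tau> :: 'a mat))"
  then have r: "r < N" and s: "s < N" by (simp_all add: perm_mat_def)
  define l0 where "l0 = \<tau> (Suc s) - 1"
  have "\<tau> (Suc s) \<in> {1..N}" using permutes_in_image[OF \<tau>] s by simp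
  then have l0: "l0 < N" "Suc l0 = \<tau> (Suc s)" by (auto simp: l0_def)
  have "(perm_mat N \<sigma> * (perm_mat N \<tau> :: 'a mat)) $$ (r, s)
      = (\<Sum>l<N. (if Suc r = \<sigma> (Suc l) then 1 else 0) * (if Suc l = \<tau> (Suc s) then 1 else 0))"
    by (subst index_mult_mat_square[OF perm_mat_carrier perm_mat_carrier r s]) (simp add: perm_mat_def r s)
  also have "\<dots> = (\<Sum>l<N. if l = l0 then (if Suc r = \<sigma> (Suc l0) then 1 else 0) else (0 :: 'a))"
    using l0 by (intro sum.cong refl) auto
  also have "\<dots> = perm_mat N (\<sigma> \<circ> \<tau>) $$ (r, s)"
    using l0 r s by (simp add: perm_mat_def)
  finally show "perm_mat N (\<sigma> \<circ> \<tau>) $$ (r, s) = (perm_mat N \<sigma> * (perm_mat N \<tau> :: 'a mat)) $$ (r, s)" ..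
qed (simp_all add: perm_mat_def)

lemma perm_mat_inj:
  assumes \<sigma>: "\<sigma> permutes {1..N}" and \<tau>: "\<tau> permutes {1..N}"
    and eq: "perm_mat N \<sigma> = (perm_mat N \<tau> :: 'a :: comm_ring_1 mat)"
  shows "\<sigma> = \<tau>"
proof
  fix x show "\<sigma> x = \<tau> x"
  proof (cases "x \<in> {1..N}")
    case True
    then have "\<sigma> x \<in> {1..N}" using permutes_in_image[OF \<sigma>] by simp
    then have "(perm_mat N \<sigma> :: 'a mat) $$ (\<sigma> x - 1, x - 1) = 1"
      using True by (auto simp: perm_mat_def)
    then show ?thesis
      using eq True \<open>\<sigma> x \<in> {1..N}\<close> by (auto simp: perm_mat_def split: if_splits)
  next
    case False
    then show ?thesis using permutes_not_in[OF \<sigma>] permutes_not_in[OF \<tau>] by simp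
  qed
qed

lemma perm_mat_hom: "perm_mat N \<in> hom (sym_group N) (GL_C N)"
proof -
  have "invertible_mat (perm_mat N \<sigma> :: complex mat)" if \<sigma>: "\<sigma> permutes {1..N}" for \<sigma>
  proof -
    have "perm_mat N \<sigma> * perm_mat N (inv' \<sigma>) = (1\<^sub>m N :: complex mat)"
      "perm_mat N (inv' \<sigma>) * perm_mat N \<sigma> = (1\<^sub>m N :: complex mat)"
      using perm_mat_comp[OF \<sigma> permutes_inv[OF \<sigma>], where 'a = complex]
        perm_mat_comp[OF permutes_inv[OF \<sigma>] \<sigma>, where 'a = complex]
      by (simp_all add: permutes_inv_o[OF \<sigma>] perm_mat_id)
    then show ?thesis
      unfolding invertible_mat_def inverts_mat_def by (auto simp: perm_mat_def)
  qed
  then show ?thesis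
    by (auto simp: hom_def GL_C_def sym_group_carrier sym_group_mult perm_mat_comp)
qed

lemma faithful_rep_of_embeds_in_sym:
  assumes "embeds_in_sym G N"
  shows "\<exists>\<pi>. faithful_rep G N \<pi>"
proof -
  obtain f where f: "f \<in> hom G (sym_group N)" "inj_on f (carrier G)"
    using assms unfolding embeds_in_sym_def by blast
  have "inj_on (perm_mat N :: _ \<Rightarrow> complex mat) (f ` carrier G)"
    using f(1) perm_mat_inj by (fastforce simp: inj_on_def hom_def sym_group_carrier)
  then have "inj_on ((perm_mat N :: _ \<Rightarrow> complex mat) \<circ> f) (carrier G)"
    by (rule comp_inj_on[OF f(2)])
  moreover have "perm_mat N \<circ> f \<in> hom G (GL_C N)"
    using f(1) perm_mat_hom by (rule hom_compose)
  ultimately show ?thesis unfolding faithful_rep_def by blast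
qed

lemma (in group) ex_faithful_rep: "finite (carrier G) \<Longrightarrow> \<exists>N \<pi>. faithful_rep G N \<pi>"
  using faithful_rep_of_embeds_in_sym[OF cayley_embeds_in_sym] by blast

section \<open>Faithful representations of semidirect products\<close>

definition conj_weight :: "('g, 'b) monoid_scheme \<Rightarrow> 'g set \<Rightarrow> 'g \<Rightarrow> ('g \<Rightarrow> 'c) \<Rightarrow> 'g \<Rightarrow> 'c" where
  "conj_weight G A h \<psi> = (\<lambda>a\<in>A. \<psi> (inv\<^bsub>G\<^esub> h \<otimes>\<^bsub>G\<^esub> a \<otimes>\<^bsub>G\<^esub> h))"

lemma (in group) conj_weight_mult:
  assumes A: "A \<lhd> G" and h: "h \<in> carrier G" and k: "k \<in> carrier G" and \<psi>: "\<psi> \<in> extensional A"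
  shows "conj_weight G A (h \<otimes> k) \<psi> = conj_weight G A h (conj_weight G A k \<psi>)"
proof
  fix a show "conj_weight G A (h \<otimes> k) \<psi> a = conj_weight G A h (conj_weight G A k \<psi>) a"
  proof (cases "a \<in> A")
    case True
    then have "inv h \<otimes> a \<otimes> h \<in> A" using normal.inv_op_closed1[OF A h] by blast
    then show ?thesis
      using True h k normal_imp_subgroup[OF A]
      by (simp add: conj_weight_def inv_mult_group m_assoc subgroup.mem_carrier)
  qed (simp add: conj_weight_def)
qed

lemma (in group) conj_weight_one:
  "subgroup A G \<Longrightarrow> \<psi> \<in> extensional A \<Longrightarrow> conj_weight G A \<one> \<psi> = \<psi>"
  by (auto simp: conj_weight_def extensional_def subgroup.mem_carrier)

locale complex_rep = group G for G (structure) +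
  fixes n :: nat and \<pi> :: "'a \<Rightarrow> complex mat"
  assumes rep_hom: "\<pi> \<in> hom G (GL_C n)"
begin

lemma rep_carrier [simp]: "x \<in> carrier G \<Longrightarrow> \<pi> x \<in> carrier_mat n n"
  and rep_mult: "x \<in> carrier G \<Longrightarrow> y \<in> carrier G \<Longrightarrow> \<pi> (x \<otimes> y) = \<pi> x * \<pi> y"
  using rep_hom by (auto simp: hom_def GL_C_def)

lemma rep_one [simp]: "\<pi> \<one> = 1\<^sub>m n"
proof -
  have "invertible_mat (\<pi> \<one>)" using rep_hom by (auto simp: hom_def GL_C_def)
  then obtain B where B: "\<pi> \<one> * B = 1\<^sub>m n" "B * \<pi> \<one> = 1\<^sub>m (dim_row B)"
    using carrier_matD[OF rep_carrier[OF one_closed]] by (auto simp: invertible_mat_def inverts_mat_def)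
  have BC: "B \<in> carrier_mat n n"
    using B rep_carrier[of \<one>] by (metis carrier_matD(2) carrier_matI index_mult_mat(3) index_one_mat(3) one_closed)
  have idem: "\<pi> \<one> * \<pi> \<one> = \<pi> \<one>"
    by (metis one_closed r_one rep_mult)
  have "\<pi> \<one> * (\<pi> \<one> * B) = \<pi> \<one> * B"
    using assoc_mult_mat[OF rep_carrier rep_carrier BC, OF one_closed one_closed] idem by simp
  then show ?thesis
    using B(1) right_mult_one_mat[OF rep_carrier[OF one_closed]] by simp
qed

lemma rep_inv_mult: "x \<in> carrier G \<Longrightarrow> \<pi> (inv x) * \<pi> x = 1\<^sub>m n"
  by (metis l_inv inv_closed rep_mult rep_one)

lemma rep_pow: "x \<in> carrier G \<Longrightarrow> \<pi> (x [^] m) = \<pi> x ^\<^sub>m m"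
  by (induction m) (simp_all add: rep_mult carrier_matD[OF rep_carrier])

lemma rep_mult_vec_nonzero:
  assumes x: "x \<in> carrier G" and w: "w \<in> carrier_vec n" "w \<noteq> 0\<^sub>v n"
  shows "\<pi> x *\<^sub>v w \<noteq> 0\<^sub>v n"
proof
  assume "\<pi> x *\<^sub>v w = 0\<^sub>v n"
  then have "(\<pi> (inv x) * \<pi> x) *\<^sub>v w = 0\<^sub>v n"
    using x w(1) by (auto simp: assoc_mult_mat_vec[of _ n n _ n])
  then show False using rep_inv_mult[OF x] w by simp
qed

lemma commuting_finite_order_family:
  assumes fin: "finite (carrier G)" and A: "subgroup A G"
    and comm: "\<And>a b. a \<in> A \<Longrightarrow> b \<in> A \<Longrightarrow> a \<otimes> b = b \<otimes> a"
  shows "commuting_finite_order_family n (Coset.order G) A \<pi>"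
proof
  show "finite A" using fin A by (meson finite_subset subgroup.subset)
  show "0 < Coset.order G" using fin by (simp add: order_gt_0_iff_finite)
  fix a b assume a: "a \<in> A" and b: "b \<in> A"
  have ac: "a \<in> carrier G" and bc: "b \<in> carrier G" using a b A by (auto intro: subgroup.mem_carrier)
  show "\<pi> a \<in> carrier_mat n n" using ac by simp
  show "\<pi> a ^\<^sub>m Coset.order G = 1\<^sub>m n" using ac by (simp flip: rep_pow add: pow_order_eq_1)
  show "\<pi> a * \<pi> b = \<pi> b * \<pi> a" using ac bc comm[OF a b] by (simp flip: rep_mult)
qed

lemma conj_weight_in_weights:
  assumes A: "A \<lhd> G" and h: "h \<in> carrier G" and \<psi>: "\<psi> \<in> weights n A \<pi>"
  shows "conj_weight G A h \<psi> \<in> weights n A \<pi>"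
proof -
  obtain w where w: "w \<in> carrier_vec n" "w \<noteq> 0\<^sub>v n" and eig: "\<And>a. a \<in> A \<Longrightarrow> \<pi> a *\<^sub>v w = \<psi> a \<cdot>\<^sub>v w"
    using \<psi> unfolding weights_def by blast
  have "\<pi> a *\<^sub>v (\<pi> h *\<^sub>v w) = conj_weight G A h \<psi> a \<cdot>\<^sub>v (\<pi> h *\<^sub>v w)" if a: "a \<in> A" for a
  proof -
    define a' where "a' = inv h \<otimes> a \<otimes> h"
    have a': "a' \<in> A" unfolding a'_def using normal.inv_op_closed1[OF A h a] .
    have ac: "a \<in> carrier G" and a'c: "a' \<in> carrier G"
      using a a' normal_imp_subgroup[OF A] by (auto intro: subgroup.mem_carrier)
    have "a \<otimes> h = h \<otimes> a'" using ac h by (simp add: a'_def m_assoc[symmetric])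
    then have "\<pi> a * \<pi> h = \<pi> h * \<pi> a'" using ac h a'c by (simp flip: rep_mult)
    then have "\<pi> a *\<^sub>v (\<pi> h *\<^sub>v w) = \<pi> h *\<^sub>v (\<pi> a' *\<^sub>v w)"
      using ac h a'c w(1) by (simp add: assoc_mult_mat_vec[of _ n n _ n, symmetric])
    also have "\<dots> = \<psi> a' \<cdot>\<^sub>v (\<pi> h *\<^sub>v w)"
      using eig[OF a'] mult_mat_vec[OF rep_carrier[OF h] w(1)] by simp
    finally show ?thesis using a by (simp add: conj_weight_def a'_def)
  qed
  moreover have "conj_weight G A h \<psi> \<in> extensional A"
    by (simp add: conj_weight_def)
  moreover have "\<pi> h *\<^sub>v w \<in> carrier_vec n"
    by (rule mult_mat_vec_carrier[OF rep_carrier[OF h] w(1)])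
  ultimately show ?thesis
    unfolding weights_def using rep_mult_vec_nonzero[OF h w] by blast
qed

lemma conj_action_eq_if_conj_weights_eq:
  assumes fin: "finite (carrier G)" and faithful: "inj_on \<pi> (carrier G)"
    and A: "A \<lhd> G" and comm: "\<And>a b. a \<in> A \<Longrightarrow> b \<in> A \<Longrightarrow> a \<otimes> b = b \<otimes> a"
    and h: "h \<in> carrier G" and k: "k \<in> carrier G"
    and eq: "\<And>\<psi>. \<psi> \<in> weights n A \<pi> \<Longrightarrow> conj_weight G A h \<psi> = conj_weight G A k \<psi>"
  shows "conj_action G A h = conj_action G A k"
proof
  fix a show "conj_action G A h a = conj_action G A k a"
  proof (cases "a \<in> A")
    case True
    interpret family: commuting_finite_order_family n "Coset.order G" A \<pi>
      using commuting_finite_order_family[OF fin normal_imp_subgroup[OF A] comm] .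
    have sub: "subgroup A G" using normal_imp_subgroup[OF A] .
    define b where "b = h \<otimes> a \<otimes> inv h"
    have b: "b \<in> A" unfolding b_def using normal.inv_op_closed2[OF A h True] .
    have ac: "a \<in> carrier G" and bc: "b \<in> carrier G"
      using True b sub by (auto intro: subgroup.mem_carrier)
    have "\<psi> (inv h \<otimes> b \<otimes> h) = \<psi> (inv k \<otimes> b \<otimes> k)" if "\<psi> \<in> weights n A \<pi>" for \<psi>
      using fun_cong[OF eq[OF that], of b] b by (simp add: conj_weight_def)
    then have "\<pi> (inv h \<otimes> b \<otimes> h) = \<pi> (inv k \<otimes> b \<otimes> k)"
      using family.eq_if_weights_eq normal.inv_op_closed1[OF A h b] normal.inv_op_closed1[OF A k b] by blast
    then have "inv h \<otimes> b \<otimes> h = inv k \<otimes> b \<otimes> k"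
      using faithful h k bc by (auto dest: inj_onD)
    moreover have "inv h \<otimes> b \<otimes> h = a"
      using h ac by (simp add: b_def m_assoc) (simp add: m_assoc[symmetric])
    moreover have "k \<otimes> (inv k \<otimes> b \<otimes> k) \<otimes> inv k = b"
      using k bc by (simp add: m_assoc) (simp add: m_assoc[symmetric])
    ultimately have "k \<otimes> a \<otimes> inv k = b" by simp
    then show ?thesis using True by (simp add: conj_action_def b_def)
  qed (simp add: conj_action_def)
qed

end

lemma (in complex_rep) embeds_in_sym_of_faithful_rep:
  assumes fin: "finite (carrier G)" and faithful: "inj_on \<pi> (carrier G)"
    and semidirect: "internal_semidirect G A H"
    and A_comm: "comm_group (G\<lparr>carrier := A\<rparr>)"
    and conj_inj: "inj_on (conj_action G A) H"
  shows "embeds_in_sym (G\<lparr>carrier := H\<rparr>) n"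
proof -
  have A: "A \<lhd> G" and H: "subgroup H G"
    using semidirect by (auto simp: internal_semidirect_def)
  have comm: "a \<otimes> b = b \<otimes> a" if "a \<in> A" "b \<in> A" for a b
    using comm_monoid.m_comm[OF comm_group.axioms(1)[OF A_comm]] that by simp
  interpret family: commuting_finite_order_family n "Coset.order G" A \<pi>
    by (rule commuting_finite_order_family[OF fin normal_imp_subgroup[OF A] comm])
  interpret H: group "G\<lparr>carrier := H\<rparr>"
    by (rule subgroup.subgroup_is_group[OF H is_group])
  have HG: "h \<in> carrier G" if "h \<in> H" for h
    using H that by (rule subgroup.mem_carrier)
  have closed: "\<forall>h\<in>H. \<forall>\<psi>\<in>weights n A \<pi>. conj_weight G A h \<psi> \<in> weights n A \<pi>"
    using conj_weight_in_weights[OF A] HG by blast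
  have one: "\<forall>\<psi>\<in>weights n A \<pi>. conj_weight G A \<one> \<psi> = \<psi>"
    using conj_weight_one[OF normal_imp_subgroup[OF A]] weights_extensional by blast
  have mult: "\<forall>h\<in>H. \<forall>k\<in>H. \<forall>\<psi>\<in>weights n A \<pi>.
      conj_weight G A (h \<otimes> k) \<psi> = conj_weight G A h (conj_weight G A k \<psi>)"
    using conj_weight_mult[OF A] HG weights_extensional by blast
  show ?thesis
  proof (rule H.embeds_in_sym_of_faithful_action[where act = "conj_weight G A"])
    fix h k assume h: "h \<in> carrier (G\<lparr>carrier := H\<rparr>)" and k: "k \<in> carrier (G\<lparr>carrier := H\<rparr>)"
      and eq: "\<And>\<psi>. \<psi> \<in> weights n A \<pi> \<Longrightarrow> conj_weight G A h \<psi> = conj_weight G A k \<psi>"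
    have "conj_action G A h = conj_action G A k"
      using conj_action_eq_if_conj_weights_eq[OF fin faithful A comm] h k eq HG by simp
    then show "h = k" using conj_inj h k by (simp add: inj_on_def)
  qed (use closed one mult family.finite_weights family.card_weights_le in auto)
qed

theorem theorem4p4:
  fixes G :: "('g, 'b) monoid_scheme" and A H :: "'g set"
  assumes "group G" and "finite (carrier G)"
    and "internal_semidirect G A H"
    and "comm_group (G\<lparr>carrier := A\<rparr>)"
    and "inj_on (conj_action G A) H"
  shows "(\<forall>p \<pi>. faithful_rep G p \<pi> \<longrightarrow> embeds_in_sym (G\<lparr>carrier := H\<rparr>) p)
         \<and> mdim_C G \<ge> min_perm_degree (G\<lparr>carrier := H\<rparr>)"
proof -
  have embeds: "\<forall>p \<pi>. faithful_rep G p \<pi> \<longrightarrow> embeds_in_sym (G\<lparr>carrier := H\<rparr>) p"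
    using complex_rep.embeds_in_sym_of_faithful_rep[OF _ assms(2) _ assms(3-5)] assms(1)
    by (auto simp: faithful_rep_def complex_rep_def complex_rep_axioms_def)
  have "\<exists>\<pi>. faithful_rep G (mdim_C G) \<pi>"
    unfolding mdim_C_def using group.ex_faithful_rep[OF assms(1,2)] by (rule LeastI_ex)
  then have "min_perm_degree (G\<lparr>carrier := H\<rparr>) \<le> mdim_C G"
    using embeds unfolding min_perm_degree_def by (blast intro: Least_le)
  with embeds show ?thesis by blast
qed

end
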